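(* For all $x,y\in\mathbb{R}^k\setminus\{0\}$, $\|h_x-h_y\|\leqslant\Big(\frac{(2d^2+(10\pi+8)d+20\pi)\|x_*\|}{\pi^22^d}\max\big(\frac1{\|x\|},\frac1{\|y\|}\big)+\frac1{2^d}\Big)\|x-y\|$. In particular, if $x,y\notin\mathcal{B}(0,r\|x_*\|)$ for some $r>0$, then $\|h_x-h_y\|\leqslant\Big(\frac{2d^2+(10\pi+8)d+20\pi}{r\pi^22^d}+\frac1{2^d}\Big)\|x-y\|$.
   Context: Fix $x_*\in\mathbb{R}^k\setminus\{0\}$ and a positive integer $d$. Let $g(\theta)=\cos^{-1}\!\big(\frac{(\pi-\theta)\cos\theta+\sin\theta}{\pi}\big)$. For $x\neq0$, $\overline\theta_{0,x}=\angle(x,x_* )$, $\overline\theta_{i,x}=g(\overline\theta_{i-1,x})$ for $i\in[d]$, and $h_x:=-\frac{\|x_*\|}{2^d}\frac{\pi-2\overline\theta_{d,x}}{\pi}\Big(\prod_{i=0}^{d-1}\frac{\pi-\overline\theta_{i,x}}{\pi}\Big)\hat x_*+\frac1{2^d}\Big[\|x\|-\|x_*\|\Big(\frac{2\sin\overline\theta_{d,x}}{\pi}+\frac{\pi-2\overline\theta_{d,x}}{\pi}\sum_{i=0}^{d-1}\frac{\sin\overline\theta_{i,x}}{\pi}\prod_{j=i+1}^{d-1}\frac{\pi-\overline\theta_{j,x}}{\pi}\Big)\Big]\hat x$, $\hat x=x/\|x\|$. $\mathcal{B}(0,r)$ is the closed ball. *)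

theory Defs
  imports "HOL-Analysis.Analysis"
begin

definition vec_angle :: "'a::real_inner \<Rightarrow> 'a \<Rightarrow> real" where
  "vec_angle x y = arccos ((x \<bullet> y) / (norm x * norm y))"

definition gmap :: "real \<Rightarrow> real" where
  "gmap \<theta> = arccos (((pi - \<theta>) * cos \<theta> + sin \<theta>) / pi)"

fun theta_bar :: "'a::real_inner \<Rightarrow> nat \<Rightarrow> 'a \<Rightarrow> real" where
  "theta_bar xs 0 x = vec_angle x xs"
| "theta_bar xs (Suc i) x = gmap (theta_bar xs i x)"

definition h_vec :: "'a::real_inner \<Rightarrow> nat \<Rightarrow> 'a \<Rightarrow> 'a" where
  "h_vec xs d x =
     ((- norm xs / 2 ^ d) * ((pi - 2 * theta_bar xs d x) / pi)
        * (\<Prod>i=0..<d. (pi - theta_bar xs i x) / pi)) *\<^sub>R sgn xs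
   + ((1 / 2 ^ d) * (norm x - norm xs *
        (2 * sin (theta_bar xs d x) / pi
         + ((pi - 2 * theta_bar xs d x) / pi)
           * (\<Sum>i=0..<d. (sin (theta_bar xs i x) / pi)
                * (\<Prod>j=Suc i..<d. (pi - theta_bar xs j x) / pi))))) *\<^sub>R sgn x"

end

theory Submission
  imports Defs
begin

text \<open>
Write h_x = -(|x_*|/2^d) A sgn x_* + x/2^d - (|x_*|/2^d) B sgn x, where the coefficients A and B
are built from the angles theta_i(x) out of factors (pi - theta_i)/pi in [0, 1], sines, and
(pi - 2 theta_d)/pi. If every angle moves by at most delta, telescoping the products shows that
A moves by O(d) delta/pi and B by O(d^2) delta/pi. The map g is 1-Lipschitz on [0, pi]: its
derivative is (pi - t) sin t / (pi sqrt (1 - c^2)) with c = ((pi - t) cos t + sin t)/pi, and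
((pi - t) sin t)^2 + (pi c)^2 <= pi^2 since the left side equals pi^2 at t = 0 and has derivative
-4 (pi - t) sin^2 t. So every angle moves by at most
delta = |theta_0(x) - theta_0(y)| <= pi |sgn x - sgn y| <= pi max(1/|x|, 1/|y|) |x - y|.
\<close>

section \<open>The map g\<close>

definition gmap_arg :: "real \<Rightarrow> real" where
  "gmap_arg t = ((pi - t) * cos t + sin t) / pi"

lemma gmap_eq_arccos: "gmap t = arccos (gmap_arg t)"
  by (simp add: gmap_def gmap_arg_def)

lemma pi_minus_sin_cos_sq_le:
  assumes "0 \<le> t" "t \<le> pi"
  shows "((pi - t) * sin t)\<^sup>2 + ((pi - t) * cos t + sin t)\<^sup>2 \<le> pi\<^sup>2"
proof -
  let ?F = "\<lambda>t. ((pi - t) * sin t)\<^sup>2 + ((pi - t) * cos t + sin t)\<^sup>2"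
  have "?F t \<le> ?F 0"
  proof (rule DERIV_nonpos_imp_nonincreasing[OF assms(1)])
    fix s assume "0 \<le> s" "s \<le> t"
    have "(?F has_real_derivative - 4 * (pi - s) * (sin s)\<^sup>2) (at s)"
      by (auto intro!: derivative_eq_intros simp: algebra_simps power2_eq_square)
    moreover have "0 \<le> (pi - s) * (sin s)\<^sup>2"
      using \<open>s \<le> t\<close> assms by simp
    then have "- 4 * (pi - s) * (sin s)\<^sup>2 \<le> 0" by linarith
    ultimately show "\<exists>D. (?F has_real_derivative D) (at s) \<and> D \<le> 0" by blast
  qed
  then show ?thesis by simp
qed

lemma gmap_arg_sq_le:
  assumes "0 \<le> t" "t \<le> pi"
  shows "((pi - t) * sin t / pi)\<^sup>2 + (gmap_arg t)\<^sup>2 \<le> 1"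
proof -
  have "((pi - t) * sin t / pi)\<^sup>2 + (gmap_arg t)\<^sup>2
      = (((pi - t) * sin t)\<^sup>2 + ((pi - t) * cos t + sin t)\<^sup>2) / pi\<^sup>2"
    unfolding gmap_arg_def power_divide by (rule add_divide_distrib[symmetric])
  then show ?thesis using pi_minus_sin_cos_sq_le[OF assms] by simp
qed

lemma abs_gmap_arg_le:
  assumes "0 \<le> t" "t \<le> pi"
  shows "\<bar>gmap_arg t\<bar> \<le> 1"
proof -
  have "(gmap_arg t)\<^sup>2 \<le> 1"
    using gmap_arg_sq_le[OF assms] zero_le_power2[of "(pi - t) * sin t / pi"] by linarith
  then show ?thesis by (simp add: abs_square_le_1)
qed

lemma abs_gmap_arg_less:
  assumes "0 < t" "t < pi"
  shows "\<bar>gmap_arg t\<bar> < 1"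
proof -
  have "0 < sin t" using assms by (rule sin_gt_zero)
  then have "0 < ((pi - t) * sin t / pi)\<^sup>2" using assms by simp
  then have "(gmap_arg t)\<^sup>2 < 1" using gmap_arg_sq_le[of t] assms by linarith
  then show ?thesis by (simp add: abs_square_less_1)
qed

lemma gmap_bounds:
  assumes "0 \<le> t" "t \<le> pi"
  shows "0 \<le> gmap t \<and> gmap t \<le> pi"
  using abs_gmap_arg_le[OF assms] unfolding gmap_eq_arccos by (intro arccos_bounded) auto

lemma has_real_derivative_gmap:
  assumes "0 < t" "t < pi"
  shows "(gmap has_real_derivative (pi - t) * sin t / pi / sqrt (1 - (gmap_arg t)\<^sup>2)) (at t)"
proof -
  have "(gmap_arg has_real_derivative - ((pi - t) * sin t / pi)) (at t)"
    unfolding gmap_arg_def[abs_def] by (auto intro!: derivative_eq_intros simp: field_simps)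
  from DERIV_chain2[OF DERIV_arccos this] show ?thesis
    using abs_gmap_arg_less[OF assms] unfolding gmap_eq_arccos[abs_def]
    by (simp add: divide_inverse_commute abs_less_iff)
qed

lemma abs_gmap_derivative_le_1:
  assumes "0 < t" "t < pi"
  shows "\<bar>(pi - t) * sin t / pi / sqrt (1 - (gmap_arg t)\<^sup>2)\<bar> \<le> 1"
proof -
  define q where "q = (pi - t) * sin t / pi"
  define S where "S = sqrt (1 - (gmap_arg t)\<^sup>2)"
  have "0 \<le> q" using assms by (simp add: q_def sin_ge_zero)
  moreover have "q \<le> S"
    using gmap_arg_sq_le[of t] assms unfolding q_def S_def by (intro real_le_rsqrt) simp
  moreover have "0 < S"
    using abs_gmap_arg_less[OF assms] by (simp add: S_def abs_square_less_1[symmetric])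
  ultimately show ?thesis unfolding q_def[symmetric] S_def[symmetric] by simp
qed

lemma abs_gmap_diff_le:
  assumes "0 \<le> a" "a \<le> pi" "0 \<le> b" "b \<le> pi"
  shows "\<bar>gmap a - gmap b\<bar> \<le> \<bar>a - b\<bar>"
proof -
  have "\<bar>gmap v - gmap u\<bar> \<le> v - u" if "0 \<le> u" "u < v" "v \<le> pi" for u v
  proof -
    have "continuous_on {u..v} gmap_arg"
      unfolding gmap_arg_def[abs_def] by (intro continuous_intros) auto
    then have "continuous_on {u..v} gmap"
      unfolding gmap_eq_arccos[abs_def] using abs_gmap_arg_le that
      by (intro continuous_on_arccos) (auto simp: abs_le_iff)
    moreover have "gmap differentiable (at s)" if "u < s" "s < v" for s
      using has_real_derivative_gmap[of s] that \<open>0 \<le> u\<close> \<open>v \<le> pi\<close>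
      unfolding real_differentiable_def by force
    ultimately obtain s D where s: "u < s" "s < v" "(gmap has_real_derivative D) (at s)"
      and "gmap v - gmap u = (v - u) * D"
      using MVT[OF \<open>u < v\<close>] by blast
    moreover have "\<bar>D\<bar> \<le> 1"
      using DERIV_unique[OF s(3) has_real_derivative_gmap] abs_gmap_derivative_le_1 s that by force
    ultimately show ?thesis using that by (simp add: abs_mult mult_left_le)
  qed
  then show ?thesis using assms
    by (cases a b rule: linorder_cases) (force simp: abs_minus_commute)+
qed

section \<open>Angles and directions\<close>

lemma vec_angle_bounds: "0 \<le> vec_angle x y \<and> vec_angle x y \<le> pi"
proof -
  have "\<bar>x \<bullet> y\<bar> \<le> norm x * norm y" by (rule Cauchy_Schwarz_ineq2)
  then have "\<bar>(x \<bullet> y) / (norm x * norm y)\<bar> \<le> 1"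
    by (cases "norm x * norm y = 0") (auto simp: abs_divide divide_le_eq)
  then show ?thesis unfolding vec_angle_def abs_le_iff by (intro arccos_bounded) linarith+
qed

lemma vec_angle_sgn:
  fixes x y :: "'a::real_inner"
  assumes "x \<noteq> 0" "y \<noteq> 0"
  shows "vec_angle x y = arccos (sgn x \<bullet> sgn y)"
  using assms by (simp add: vec_angle_def sgn_div_norm field_simps)

lemma sin_ge_div_pi:
  assumes "0 \<le> t" "t \<le> pi / 2"
  shows "t / pi \<le> sin t"
proof -
  have "\<bar>sin t - (\<Sum>m<3. sin_coeff m * t ^ m)\<bar> \<le> inverse (fact 3) * \<bar>t\<bar> ^ 3"
    by (rule Maclaurin_sin_bound)
  then have "\<bar>sin t - t\<bar> \<le> t ^ 3 / 6"
    using assms by (simp add: sin_coeff_def numeral_3_eq_3 fact_numeral)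
  then have "t - t ^ 3 / 6 \<le> sin t" unfolding abs_le_iff by linarith
  moreover have "t / pi \<le> t - t ^ 3 / 6"
  proof -
    have "t\<^sup>2 \<le> (pi / 2)\<^sup>2" using assms by (intro power_mono) auto
    also have "\<dots> \<le> 2\<^sup>2" using pi_less_4 by (intro power_mono) auto
    finally have "1 / 3 \<le> 1 - t\<^sup>2 / 6" by simp
    moreover have "1 / pi \<le> 1 / 3" using pi_gt3 by (simp add: divide_le_eq)
    ultimately have "1 / pi \<le> 1 - t\<^sup>2 / 6" by linarith
    from mult_left_mono[OF this \<open>0 \<le> t\<close>] show ?thesis
      by (simp add: algebra_simps power3_eq_cube power2_eq_square)
  qed
  ultimately show ?thesis by linarith
qed

lemma abs_inner_unit_le_1:
  fixes u e :: "'a::real_inner"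
  assumes "norm u = 1" "norm e = 1"
  shows "\<bar>u \<bullet> e\<bar> \<le> 1"
  using Cauchy_Schwarz_ineq2[of u e] assms by simp

lemma inner_le_cos_arccos_inner_diff:
  fixes u v e :: "'a::real_inner"
  assumes "norm u = 1" "norm v = 1" "norm e = 1"
  shows "u \<bullet> v \<le> cos (arccos (u \<bullet> e) - arccos (v \<bullet> e))"
proof -
  have "e \<bullet> e = 1" using assms(3) by (simp add: dot_square_norm)
  then have proj: "(w - (w \<bullet> e) *\<^sub>R e) \<bullet> (z - (z \<bullet> e) *\<^sub>R e) = w \<bullet> z - (w \<bullet> e) * (z \<bullet> e)"
    for w z by (simp add: inner_diff_left inner_diff_right inner_commute[of e z] algebra_simps)
  have norm_proj: "norm (w - (w \<bullet> e) *\<^sub>R e) = sqrt (1 - (w \<bullet> e)\<^sup>2)" if "norm w = 1" for w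
  proof -
    have "w \<bullet> w = 1" using that by (simp add: dot_square_norm)
    then show ?thesis using proj[of w w] by (simp add: norm_eq_sqrt_inner power2_eq_square)
  qed
  note unit = abs_inner_unit_le_1[OF _ assms(3)]
  have "u \<bullet> v - (u \<bullet> e) * (v \<bullet> e) \<le> sqrt (1 - (u \<bullet> e)\<^sup>2) * sqrt (1 - (v \<bullet> e)\<^sup>2)"
    using norm_cauchy_schwarz[of "u - (u \<bullet> e) *\<^sub>R e" "v - (v \<bullet> e) *\<^sub>R e"]
    unfolding proj norm_proj[OF assms(1)] norm_proj[OF assms(2)] .
  then show ?thesis
    unfolding cos_diff cos_arccos_abs[OF unit[OF assms(1)]] cos_arccos_abs[OF unit[OF assms(2)]]
      sin_arccos_abs[OF unit[OF assms(1)]] sin_arccos_abs[OF unit[OF assms(2)]]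
    by linarith
qed

lemma le_pi_mult_norm_diff_if_inner_le_cos:
  fixes u v :: "'a::real_inner"
  assumes "norm u = 1" "norm v = 1" "0 \<le> \<gamma>" "\<gamma> \<le> pi" "u \<bullet> v \<le> cos \<gamma>"
  shows "\<gamma> \<le> pi * norm (u - v)"
proof -
  have "u \<bullet> u = 1" "v \<bullet> v = 1" using assms by (simp_all add: dot_square_norm)
  then have "(norm (u - v))\<^sup>2 = 2 - 2 * (u \<bullet> v)"
    unfolding power2_norm_eq_inner by (simp add: inner_diff_left inner_diff_right inner_commute[of v u])
  moreover have "cos \<gamma> = 1 - 2 * (sin (\<gamma> / 2))\<^sup>2" using cos_double_sin[of "\<gamma> / 2"] by simp
  ultimately have "(2 * sin (\<gamma> / 2))\<^sup>2 \<le> (norm (u - v))\<^sup>2"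
    using assms by (simp add: power_mult_distrib)
  then have "2 * sin (\<gamma> / 2) \<le> norm (u - v)" by (rule power2_le_imp_le) simp
  then have "pi * (2 * sin (\<gamma> / 2)) \<le> pi * norm (u - v)" by (simp add: pi_ge_zero)
  moreover have "\<gamma> / 2 / pi \<le> sin (\<gamma> / 2)" using assms by (intro sin_ge_div_pi) auto
  then have "\<gamma> \<le> pi * (2 * sin (\<gamma> / 2))" by (simp add: divide_le_eq mult.commute)
  ultimately show ?thesis by linarith
qed

lemma abs_arccos_inner_diff_le:
  fixes u v e :: "'a::real_inner"
  assumes "norm u = 1" "norm v = 1" "norm e = 1"
  shows "\<bar>arccos (u \<bullet> e) - arccos (v \<bullet> e)\<bar> \<le> pi * norm (u - v)"
proof (rule le_pi_mult_norm_diff_if_inner_le_cos[OF assms(1,2)])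
  have "0 \<le> arccos (w \<bullet> e) \<and> arccos (w \<bullet> e) \<le> pi" if "norm w = 1" for w
    using abs_inner_unit_le_1[OF that assms(3)] unfolding abs_le_iff
    by (intro arccos_bounded) linarith+
  from this[OF assms(1)] this[OF assms(2)]
  show "0 \<le> \<bar>arccos (u \<bullet> e) - arccos (v \<bullet> e)\<bar>" "\<bar>arccos (u \<bullet> e) - arccos (v \<bullet> e)\<bar> \<le> pi"
    by auto
  show "u \<bullet> v \<le> cos \<bar>arccos (u \<bullet> e) - arccos (v \<bullet> e)\<bar>"
    using inner_le_cos_arccos_inner_diff[OF assms] by simp
qed

lemma abs_vec_angle_diff_le:
  fixes x y s :: "'a::real_inner"
  assumes "x \<noteq> 0" "y \<noteq> 0" "s \<noteq> 0"
  shows "\<bar>vec_angle x s - vec_angle y s\<bar> \<le> pi * norm (sgn x - sgn y)"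
  unfolding vec_angle_sgn[OF assms(1,3)] vec_angle_sgn[OF assms(2,3)]
  using assms by (intro abs_arccos_inner_diff_le) (simp_all add: norm_sgn)

lemma norm_scaleR_unit_diff_ge:
  fixes p q :: "'a::real_inner"
  assumes "norm p = 1" "norm q = 1" "0 \<le> a" "a \<le> b"
  shows "a * norm (p - q) \<le> norm (a *\<^sub>R p - b *\<^sub>R q)"
proof (rule power2_le_imp_le)
  have "p \<bullet> p = 1" "q \<bullet> q = 1" using assms(1,2) by (simp_all add: dot_square_norm)
  then have "(norm (a *\<^sub>R p - b *\<^sub>R q))\<^sup>2 - (a * norm (p - q))\<^sup>2
      = (b - a) * (b + a - 2 * a * (p \<bullet> q))"
    unfolding power_mult_distrib power2_norm_eq_inner
    by (simp add: inner_diff_left inner_diff_right inner_commute[of q p] algebra_simps power2_eq_square)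
  moreover have "a * (p \<bullet> q) \<le> a"
    using norm_cauchy_schwarz[of p q] assms by (simp add: mult_left_le)
  then have "0 \<le> (b - a) * (b + a - 2 * a * (p \<bullet> q))"
    using assms by (intro mult_nonneg_nonneg) auto
  ultimately show "(a * norm (p - q))\<^sup>2 \<le> (norm (a *\<^sub>R p - b *\<^sub>R q))\<^sup>2" by linarith
qed simp

lemma norm_mult_norm_sgn_diff_le:
  fixes x y :: "'a::real_inner"
  assumes "norm x \<le> norm y"
  shows "norm x * norm (sgn x - sgn y) \<le> norm (x - y)"
proof (cases "x = 0")
  case False
  then have "y \<noteq> 0" using assms by auto
  have "z = norm z *\<^sub>R sgn z" for z :: 'a by (cases "z = 0") (simp_all add: sgn_div_norm)
  then have "norm (x - y) = norm (norm x *\<^sub>R sgn x - norm y *\<^sub>R sgn y)" by metis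
  then show ?thesis
    using False \<open>y \<noteq> 0\<close> assms by (simp add: norm_scaleR_unit_diff_ge norm_sgn)
qed simp

lemma norm_sgn_diff_le:
  fixes x y :: "'a::real_inner"
  assumes "x \<noteq> 0" "y \<noteq> 0"
  shows "norm (sgn x - sgn y) \<le> norm (x - y) * max (1 / norm x) (1 / norm y)"
proof -
  have "norm (sgn x - sgn y) \<le> norm (x - y) / min (norm x) (norm y)"
  proof (cases "norm x \<le> norm y")
    case True
    then show ?thesis
      using norm_mult_norm_sgn_diff_le[OF True] assms by (simp add: le_divide_eq mult.commute)
  next
    case False
    then show ?thesis
      using norm_mult_norm_sgn_diff_le[of y x] assms
      by (simp add: le_divide_eq mult.commute norm_minus_commute)
  qed
  also have "\<dots> = norm (x - y) * max (1 / norm x) (1 / norm y)"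
    using assms by (simp add: min_def max_def divide_inverse)
  finally show ?thesis .
qed

lemma theta_bar_bounds: "0 \<le> theta_bar xs i x \<and> theta_bar xs i x \<le> pi"
  by (induction i) (simp_all add: vec_angle_bounds gmap_bounds)

lemma theta_bar_diff_le:
  "\<bar>theta_bar xs i x - theta_bar xs i y\<bar> \<le> \<bar>theta_bar xs 0 x - theta_bar xs 0 y\<bar>"
proof (induction i)
  case (Suc i)
  have "\<bar>gmap (theta_bar xs i x) - gmap (theta_bar xs i y)\<bar> \<le> \<bar>theta_bar xs i x - theta_bar xs i y\<bar>"
    using theta_bar_bounds by (intro abs_gmap_diff_le) auto
  then show ?case using Suc by simp
qed simp

section \<open>The coefficients of h\<close>

definition angle_prod :: "(nat \<Rightarrow> real) \<Rightarrow> nat set \<Rightarrow> real" where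
  "angle_prod t I = (\<Prod>j\<in>I. (pi - t j) / pi)"

definition coeff_A :: "(nat \<Rightarrow> real) \<Rightarrow> nat \<Rightarrow> real" where
  "coeff_A t d = (pi - 2 * t d) / pi * angle_prod t {..<d}"

definition coeff_S :: "(nat \<Rightarrow> real) \<Rightarrow> nat \<Rightarrow> real" where
  "coeff_S t d = (\<Sum>i<d. sin (t i) / pi * angle_prod t {Suc i..<d})"

definition coeff_B :: "(nat \<Rightarrow> real) \<Rightarrow> nat \<Rightarrow> real" where
  "coeff_B t d = 2 * sin (t d) / pi + (pi - 2 * t d) / pi * coeff_S t d"

lemma h_vec_eq_coeffs:
  fixes xs x :: "'a::real_inner"
  assumes "x \<noteq> 0"
  shows "h_vec xs d x =
    (- (norm xs / 2 ^ d * coeff_A (\<lambda>i. theta_bar xs i x) d)) *\<^sub>R sgn xs + (1 / 2 ^ d) *\<^sub>R x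
    - (norm xs / 2 ^ d * coeff_B (\<lambda>i. theta_bar xs i x) d) *\<^sub>R sgn x"
proof -
  have "h_vec xs d x = (- (norm xs / 2 ^ d * coeff_A (\<lambda>i. theta_bar xs i x) d)) *\<^sub>R sgn xs
      + ((1 / 2 ^ d) * (norm x - norm xs * coeff_B (\<lambda>i. theta_bar xs i x) d)) *\<^sub>R sgn x"
    unfolding h_vec_def coeff_A_def coeff_B_def coeff_S_def angle_prod_def atLeast0LessThan
    by (simp add: mult.assoc)
  also have "((1 / 2 ^ d) * (norm x - norm xs * coeff_B (\<lambda>i. theta_bar xs i x) d)) *\<^sub>R sgn x
      = (1 / 2 ^ d) *\<^sub>R x - (norm xs / 2 ^ d * coeff_B (\<lambda>i. theta_bar xs i x) d) *\<^sub>R sgn x"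
    using assms by (simp add: sgn_div_norm algebra_simps)
  finally show ?thesis by simp
qed

lemma norm_h_vec_diff_le_coeffs:
  fixes xs x y :: "'a::real_inner" and d :: nat
  assumes "x \<noteq> 0" "y \<noteq> 0"
  defines "A \<equiv> coeff_A (\<lambda>i. theta_bar xs i x) d" and "A' \<equiv> coeff_A (\<lambda>i. theta_bar xs i y) d"
    and "B \<equiv> coeff_B (\<lambda>i. theta_bar xs i x) d" and "B' \<equiv> coeff_B (\<lambda>i. theta_bar xs i y) d"
  shows "norm (h_vec xs d x - h_vec xs d y) \<le> norm (x - y) / 2 ^ d
    + norm xs / 2 ^ d * (\<bar>A - A'\<bar> + \<bar>B - B'\<bar> + \<bar>B'\<bar> * norm (sgn x - sgn y))"
proof -
  define m where "m = norm xs / 2 ^ d"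
  define v where "v = (A - A') *\<^sub>R sgn xs + (B - B') *\<^sub>R sgn x + B' *\<^sub>R (sgn x - sgn y)"
  have "h_vec xs d x - h_vec xs d y = (1 / 2 ^ d) *\<^sub>R (x - y) - m *\<^sub>R v"
    unfolding h_vec_eq_coeffs[OF assms(1)] h_vec_eq_coeffs[OF assms(2)] A_def A'_def B_def B'_def
      m_def v_def
    by (simp add: algebra_simps)
  moreover have "norm v \<le> \<bar>A - A'\<bar> + \<bar>B - B'\<bar> + \<bar>B'\<bar> * norm (sgn x - sgn y)"
  proof -
    have "norm v \<le> norm ((A - A') *\<^sub>R sgn xs) + norm ((B - B') *\<^sub>R sgn x)
        + norm (B' *\<^sub>R (sgn x - sgn y))"
      unfolding v_def by (intro norm_triangle_le add_mono norm_triangle_ineq order_refl)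
    moreover have "norm ((A - A') *\<^sub>R sgn xs) \<le> \<bar>A - A'\<bar>" by (cases "xs = 0") (auto simp: norm_sgn)
    ultimately show ?thesis using assms by (simp add: norm_sgn)
  qed
  ultimately have "norm (h_vec xs d x - h_vec xs d y) \<le> norm (x - y) / 2 ^ d + m * norm v"
    using norm_triangle_ineq4[of "(1 / 2 ^ d) *\<^sub>R (x - y)" "m *\<^sub>R v"]
    by (simp add: m_def divide_inverse mult.commute)
  also have "\<dots> \<le> norm (x - y) / 2 ^ d
      + m * (\<bar>A - A'\<bar> + \<bar>B - B'\<bar> + \<bar>B'\<bar> * norm (sgn x - sgn y))"
    using \<open>norm v \<le> _\<close> by (intro add_left_mono mult_left_mono) (auto simp: m_def)
  finally show ?thesis unfolding m_def .
qed

section \<open>Perturbation of the coefficients\<close>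

lemma abs_mult_diff_le:
  fixes a b a' b' :: real
  shows "\<bar>a * b - a' * b'\<bar> \<le> \<bar>a - a'\<bar> * \<bar>b\<bar> + \<bar>a'\<bar> * \<bar>b - b'\<bar>"
proof -
  have "a * b - a' * b' = (a - a') * b + a' * (b - b')" by (simp add: algebra_simps)
  then show ?thesis by (metis abs_mult abs_triangle_ineq)
qed

lemma abs_sin_diff_le: "\<bar>sin a - sin b\<bar> \<le> \<bar>a - b\<bar>" for a b :: real
proof -
  have "\<bar>sin a - sin b\<bar> = 2 * \<bar>sin ((a - b) / 2)\<bar> * \<bar>cos ((a + b) / 2)\<bar>"
    by (simp add: sin_diff_sin abs_mult)
  also have "\<dots> \<le> 2 * \<bar>(a - b) / 2\<bar> * 1"
    by (intro mult_mono abs_sin_x_le_abs_x) auto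
  finally show ?thesis by simp
qed

lemma sum_lessThan_of_nat: "(\<Sum>i<n. real i) = real n * (real n - 1) / 2"
  by (induction n) (auto simp: field_simps)

lemma angle_factor_bounds:
  assumes "s \<in> {0..pi}"
  shows "0 \<le> (pi - s) / pi \<and> (pi - s) / pi \<le> 1" "\<bar>(pi - s) / pi\<bar> \<le> 1"
    "\<bar>(pi - 2 * s) / pi\<bar> \<le> 1"
  using assms pi_gt_zero by (auto simp: abs_le_iff divide_le_eq le_divide_eq)

lemma angle_prod_bounds:
  assumes "\<And>i. t i \<in> {0..pi}"
  shows "0 \<le> angle_prod t I \<and> angle_prod t I \<le> 1"
  unfolding angle_prod_def using angle_factor_bounds(1)[of "t _", OF assms]
  by (auto intro!: prod_nonneg prod_le_1)

lemma abs_coeff_S_le: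
  assumes "\<And>i. t i \<in> {0..pi}"
  shows "\<bar>coeff_S t d\<bar> \<le> d / pi"
proof -
  have "\<bar>sin (t i) / pi * angle_prod t J\<bar> \<le> 1 / pi * 1" for i J
    unfolding abs_mult using angle_prod_bounds[of t, OF assms] pi_gt_zero
    by (intro mult_mono) (auto simp: divide_right_mono)
  then have "\<bar>coeff_S t d\<bar> \<le> (\<Sum>i<d. 1 / pi)"
    unfolding coeff_S_def by (intro order_trans[OF sum_abs] sum_mono) simp
  then show ?thesis by simp
qed

lemma abs_coeff_B_le:
  assumes "\<And>i. t i \<in> {0..pi}"
  shows "\<bar>coeff_B t d\<bar> \<le> (d + 2) / pi"
proof -
  have "\<bar>coeff_B t d\<bar> \<le> \<bar>2 * sin (t d) / pi\<bar> + \<bar>(pi - 2 * t d) / pi\<bar> * \<bar>coeff_S t d\<bar>"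
    unfolding coeff_B_def by (metis abs_mult abs_triangle_ineq)
  also have "\<dots> \<le> 2 / pi + 1 * (d / pi)"
    using angle_factor_bounds(3)[of "t d", OF assms] abs_coeff_S_le[of t, OF assms] pi_gt_zero
    by (intro add_mono mult_mono) (auto simp: abs_mult divide_right_mono)
  finally show ?thesis by (simp add: add_divide_distrib)
qed

lemma coeff_constant_le:
  fixes d :: real
  assumes "0 \<le> d"
  shows "pi\<^sup>2 * (2 * d + 4 + 2 * d / pi + d * (d - 1) / (2 * pi) + (d + 2) / pi)
    \<le> 2 * d\<^sup>2 + (10 * pi + 8) * d + 20 * pi"
proof -
  have "3 < pi" "pi < 16 / 5" using pi_gt3 pi_approx by auto
  then have "0 \<le> d\<^sup>2 * (2 - pi / 2)" "0 \<le> d * (pi * (15 / 2 - 2 * pi) + 8)" "0 \<le> pi * (18 - 4 * pi)"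
    using assms by (auto intro!: mult_nonneg_nonneg)
  moreover have "2 * d\<^sup>2 + (10 * pi + 8) * d + 20 * pi
      - pi\<^sup>2 * (2 * d + 4 + 2 * d / pi + d * (d - 1) / (2 * pi) + (d + 2) / pi)
      = d\<^sup>2 * (2 - pi / 2) + d * (pi * (15 / 2 - 2 * pi) + 8) + pi * (18 - 4 * pi)"
    using pi_gt_zero by (simp add: field_simps power2_eq_square)
  ultimately show ?thesis by linarith
qed

locale angle_seq_pair =
  fixes t t' :: "nat \<Rightarrow> real" and \<delta> :: real
  assumes t_bounds: "\<And>i. t i \<in> {0..pi}" and t'_bounds: "\<And>i. t' i \<in> {0..pi}"
    and dist_le: "\<And>i. \<bar>t i - t' i\<bar> \<le> \<delta>"
begin

lemma delta_nonneg: "0 \<le> \<delta>"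
  using dist_le[of 0] by linarith

lemma abs_angle_prod_diff_le: "\<bar>angle_prod t I - angle_prod t' I\<bar> \<le> card I * (\<delta> / pi)"
proof -
  have "\<bar>angle_prod t I - angle_prod t' I\<bar> \<le> (\<Sum>j\<in>I. \<bar>(pi - t j) / pi - (pi - t' j) / pi\<bar>)"
    using norm_prod_diff[of I "\<lambda>j. (pi - t j) / pi" "\<lambda>j. (pi - t' j) / pi"]
      angle_factor_bounds(2)[OF t_bounds] angle_factor_bounds(2)[OF t'_bounds]
    unfolding angle_prod_def real_norm_def by blast
  also have "\<dots> \<le> (\<Sum>j\<in>I. \<delta> / pi)"
    using dist_le pi_gt_zero
    by (intro sum_mono) (simp add: diff_divide_distrib[symmetric] abs_minus_commute divide_right_mono)
  finally show ?thesis by simp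
qed

lemma abs_angle_factor_diff_le: "\<bar>(pi - 2 * t i) / pi - (pi - 2 * t' i) / pi\<bar> \<le> 2 * (\<delta> / pi)"
  using dist_le[of i] pi_gt_zero
  by (simp add: diff_divide_distrib[symmetric] abs_minus_commute divide_right_mono)

lemma abs_scaled_sin_diff_le: "\<bar>c * sin (t i) / pi - c * sin (t' i) / pi\<bar> \<le> \<bar>c\<bar> * (\<delta> / pi)"
proof -
  have "\<bar>c * sin (t i) / pi - c * sin (t' i) / pi\<bar> = \<bar>c\<bar> * (\<bar>sin (t i) - sin (t' i)\<bar> / pi)"
    using pi_gt_zero by (simp add: abs_mult flip: diff_divide_distrib right_diff_distrib)
  also have "\<dots> \<le> \<bar>c\<bar> * (\<delta> / pi)"
    using abs_sin_diff_le[of "t i" "t' i"] dist_le[of i] pi_gt_zero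
    by (intro mult_left_mono divide_right_mono) auto
  finally show ?thesis .
qed

lemma abs_coeff_A_diff_le: "\<bar>coeff_A t d - coeff_A t' d\<bar> \<le> (d + 2) * (\<delta> / pi)"
proof -
  have "\<bar>coeff_A t d - coeff_A t' d\<bar>
      \<le> \<bar>(pi - 2 * t d) / pi - (pi - 2 * t' d) / pi\<bar> * \<bar>angle_prod t {..<d}\<bar>
        + \<bar>(pi - 2 * t' d) / pi\<bar> * \<bar>angle_prod t {..<d} - angle_prod t' {..<d}\<bar>"
    unfolding coeff_A_def by (rule abs_mult_diff_le)
  also have "\<dots> \<le> 2 * (\<delta> / pi) * 1 + 1 * (d * (\<delta> / pi))"
    using angle_prod_bounds[of t, OF t_bounds] angle_factor_bounds(3)[OF t'_bounds]
      abs_angle_prod_diff_le[of "{..<d}"] delta_nonneg pi_gt_zero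
    by (intro add_mono mult_mono abs_angle_factor_diff_le) auto
  finally show ?thesis by (simp add: algebra_simps)
qed

lemma abs_coeff_S_diff_le:
  "\<bar>coeff_S t d - coeff_S t' d\<bar> \<le> (real d + real d * (real d - 1) / (2 * pi)) * (\<delta> / pi)"
proof -
  have "\<bar>sin (t i) / pi * angle_prod t {Suc i..<d} - sin (t' i) / pi * angle_prod t' {Suc i..<d}\<bar>
      \<le> \<delta> / pi * 1 + 1 / pi * ((real d - 1 - real i) * (\<delta> / pi))" if "i < d" for i
  proof (rule order_trans[OF abs_mult_diff_le add_mono[OF mult_mono mult_mono]])
    show "\<bar>sin (t i) / pi - sin (t' i) / pi\<bar> \<le> \<delta> / pi"
      using abs_scaled_sin_diff_le[of 1 i] by simp
    show "\<bar>angle_prod t {Suc i..<d} - angle_prod t' {Suc i..<d}\<bar> \<le> (real d - 1 - real i) * (\<delta> / pi)"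
      using abs_angle_prod_diff_le[of "{Suc i..<d}"] that by (simp add: of_nat_diff algebra_simps)
  qed (use angle_prod_bounds[of t, OF t_bounds] delta_nonneg pi_gt_zero
      in \<open>auto simp: divide_right_mono\<close>)
  then have "\<bar>coeff_S t d - coeff_S t' d\<bar>
      \<le> (\<Sum>i<d. \<delta> / pi * 1 + 1 / pi * ((real d - 1 - real i) * (\<delta> / pi)))"
    unfolding coeff_S_def sum_subtractf[symmetric] by (intro order_trans[OF sum_abs] sum_mono) simp
  also have "\<dots> = (\<Sum>i<d. 1 + (real d - 1 - real i) / pi) * (\<delta> / pi)"
    unfolding sum_distrib_right by (intro sum.cong refl) (simp add: field_simps)
  also have "(\<Sum>i<d. 1 + (real d - 1 - real i) / pi) = d + (\<Sum>i<d. real d - 1 - real i) / pi"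
    by (simp add: sum.distrib sum_divide_distrib)
  also have "(\<Sum>i<d. real d - 1 - real i) = real d * (real d - 1) / 2"
    unfolding sum_subtractf sum_lessThan_of_nat by (simp add: field_simps)
  finally show ?thesis by simp
qed

lemma abs_coeff_B_diff_le:
  "\<bar>coeff_B t d - coeff_B t' d\<bar>
    \<le> (2 + 2 * real d / pi + real d + real d * (real d - 1) / (2 * pi)) * (\<delta> / pi)"
proof -
  have "\<bar>coeff_B t d - coeff_B t' d\<bar> \<le> \<bar>2 * sin (t d) / pi - 2 * sin (t' d) / pi\<bar>
      + (\<bar>(pi - 2 * t d) / pi - (pi - 2 * t' d) / pi\<bar> * \<bar>coeff_S t d\<bar>
        + \<bar>(pi - 2 * t' d) / pi\<bar> * \<bar>coeff_S t d - coeff_S t' d\<bar>)"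
    unfolding coeff_B_def
    by (rule order_trans[OF _ add_left_mono[OF abs_mult_diff_le]]) (simp add: abs_triangle_ineq)
  also have "\<dots> \<le> 2 * (\<delta> / pi) + (2 * (\<delta> / pi) * (d / pi)
      + 1 * ((real d + real d * (real d - 1) / (2 * pi)) * (\<delta> / pi)))"
    using abs_scaled_sin_diff_le[of 2 d] abs_angle_factor_diff_le[of d]
      abs_coeff_S_le[of t, OF t_bounds] angle_factor_bounds(3)[OF t'_bounds] abs_coeff_S_diff_le delta_nonneg pi_gt_zero
    by (intro add_mono mult_mono) simp_all
  finally show ?thesis by (simp add: algebra_simps)
qed

lemma coeff_diff_sum_le:
  assumes "\<delta> \<le> pi * E"
  shows "\<bar>coeff_A t d - coeff_A t' d\<bar> + \<bar>coeff_B t d - coeff_B t' d\<bar> + \<bar>coeff_B t' d\<bar> * E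
    \<le> (2 * real d ^ 2 + (10 * pi + 8) * real d + 20 * pi) / pi\<^sup>2 * E"
proof -
  define c where "c = real d + 2 + (2 + 2 * real d / pi + real d + real d * (real d - 1) / (2 * pi))"
  have "\<delta> / pi \<le> E" using assms pi_gt_zero by (simp add: divide_le_eq mult.commute)
  moreover have "0 \<le> \<delta> / pi" using delta_nonneg by simp
  ultimately have "0 \<le> E" by linarith
  have "0 \<le> real d * (real d - 1)" by (cases d) auto
  then have "0 \<le> c" using pi_gt_zero by (simp add: c_def)
  have "\<bar>coeff_A t d - coeff_A t' d\<bar> + \<bar>coeff_B t d - coeff_B t' d\<bar>
      \<le> (real d + 2) * (\<delta> / pi)
        + (2 + 2 * real d / pi + real d + real d * (real d - 1) / (2 * pi)) * (\<delta> / pi)"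
    by (rule add_mono[OF abs_coeff_A_diff_le abs_coeff_B_diff_le])
  also have "\<dots> = c * (\<delta> / pi)" unfolding c_def by (rule distrib_right[symmetric])
  also have "\<dots> \<le> c * E" using \<open>\<delta> / pi \<le> E\<close> \<open>0 \<le> c\<close> by (rule mult_left_mono)
  moreover have "\<bar>coeff_B t' d\<bar> * E \<le> (real d + 2) / pi * E"
    using abs_coeff_B_le[of t', OF t'_bounds] \<open>0 \<le> E\<close> by (rule mult_right_mono)
  ultimately have "\<bar>coeff_A t d - coeff_A t' d\<bar> + \<bar>coeff_B t d - coeff_B t' d\<bar> + \<bar>coeff_B t' d\<bar> * E
      \<le> (c + (real d + 2) / pi) * E"
    unfolding distrib_right by linarith
  also have "\<dots> \<le> (2 * real d ^ 2 + (10 * pi + 8) * real d + 20 * pi) / pi\<^sup>2 * E"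
  proof (rule mult_right_mono[OF _ \<open>0 \<le> E\<close>])
    show "c + (real d + 2) / pi \<le> (2 * real d ^ 2 + (10 * pi + 8) * real d + 20 * pi) / pi\<^sup>2"
      using coeff_constant_le[of "real d"] pi_gt_zero
      by (simp add: c_def le_divide_eq mult.commute algebra_simps)
  qed
  finally show ?thesis .
qed

end

lemma norm_h_vec_diff_le:
  fixes xs x y :: "'a::real_inner" and d :: nat
  assumes "xs \<noteq> 0" "x \<noteq> 0" "y \<noteq> 0"
  shows "norm (h_vec xs d x - h_vec xs d y)
    \<le> ((2 * real d ^ 2 + (10 * pi + 8) * real d + 20 * pi) * norm xs / (pi ^ 2 * 2 ^ d)
        * max (1 / norm x) (1 / norm y) + 1 / 2 ^ d) * norm (x - y)"
proof -
  define K where "K = 2 * real d ^ 2 + (10 * pi + 8) * real d + 20 * pi"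
  define E where "E = norm (sgn x - sgn y)"
  interpret angle_seq_pair "\<lambda>i. theta_bar xs i x" "\<lambda>i. theta_bar xs i y"
    "\<bar>theta_bar xs 0 x - theta_bar xs 0 y\<bar>"
    using theta_bar_bounds theta_bar_diff_le by unfold_locales auto
  have "\<bar>theta_bar xs 0 x - theta_bar xs 0 y\<bar> \<le> pi * E"
    using abs_vec_angle_diff_le[OF assms(2,3,1)] by (simp add: E_def)
  note coeffs = coeff_diff_sum_le[OF this, of d, folded K_def]
  have "norm (h_vec xs d x - h_vec xs d y) \<le> norm (x - y) / 2 ^ d + norm xs / 2 ^ d
      * (\<bar>coeff_A (\<lambda>i. theta_bar xs i x) d - coeff_A (\<lambda>i. theta_bar xs i y) d\<bar>
        + \<bar>coeff_B (\<lambda>i. theta_bar xs i x) d - coeff_B (\<lambda>i. theta_bar xs i y) d\<bar>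
        + \<bar>coeff_B (\<lambda>i. theta_bar xs i y) d\<bar> * E)"
    unfolding E_def by (rule norm_h_vec_diff_le_coeffs[OF assms(2,3)])
  also have "\<dots> \<le> norm (x - y) / 2 ^ d + norm xs / 2 ^ d * (K / pi\<^sup>2 * E)"
    using coeffs by (intro add_left_mono mult_left_mono) simp_all
  also have "\<dots> \<le> norm (x - y) / 2 ^ d
      + norm xs / 2 ^ d * (K / pi\<^sup>2 * (norm (x - y) * max (1 / norm x) (1 / norm y)))"
    using norm_sgn_diff_le[OF assms(2,3)] pi_gt_zero
    by (intro add_left_mono mult_left_mono) (auto simp: E_def K_def)
  also have "\<dots>
      = (K * norm xs / (pi ^ 2 * 2 ^ d) * max (1 / norm x) (1 / norm y) + 1 / 2 ^ d) * norm (x - y)"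
    by (simp add: field_simps)
  finally show ?thesis unfolding K_def .
qed

lemma mult_max_inverse_le:
  fixes a b c r :: real
  assumes "0 < r" "0 \<le> c" "r * c < a" "r * c < b"
  shows "c * max (1 / a) (1 / b) \<le> 1 / r"
proof -
  have "c / z \<le> 1 / r" if "r * c < z" for z
  proof -
    have "0 \<le> r * c" using assms(1,2) by simp
    then have "0 < z" using that by linarith
    then show ?thesis using that assms(1) by (simp add: field_simps)
  qed
  then show ?thesis using assms by (simp add: max_def)
qed

theorem lemma4:
  fixes xs x y :: "real ^ 'k" and d :: nat
  assumes "xs \<noteq> 0" and "d > 0" and "x \<noteq> 0" and "y \<noteq> 0"
  shows "norm (h_vec xs d x - h_vec xs d y)
           \<le> ((2 * real d ^ 2 + (10 * pi + 8) * real d + 20 * pi) * norm xs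
                 / (pi ^ 2 * 2 ^ d) * max (1 / norm x) (1 / norm y) + 1 / 2 ^ d)
             * norm (x - y)
       \<and> (\<forall>r>0. norm x > r * norm xs \<longrightarrow> norm y > r * norm xs \<longrightarrow>
           norm (h_vec xs d x - h_vec xs d y)
           \<le> ((2 * real d ^ 2 + (10 * pi + 8) * real d + 20 * pi)
                 / (r * pi ^ 2 * 2 ^ d) + 1 / 2 ^ d) * norm (x - y))"
proof (intro conjI allI impI)
  let ?K = "2 * real d ^ 2 + (10 * pi + 8) * real d + 20 * pi"
  show bound: "norm (h_vec xs d x - h_vec xs d y)
    \<le> (?K * norm xs / (pi ^ 2 * 2 ^ d) * max (1 / norm x) (1 / norm y) + 1 / 2 ^ d) * norm (x - y)"
    using assms by (intro norm_h_vec_diff_le)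
  fix r :: real
  assume "r > 0" "norm x > r * norm xs" "norm y > r * norm xs"
  then have "norm xs * max (1 / norm x) (1 / norm y) \<le> 1 / r" by (intro mult_max_inverse_le) auto
  moreover have "0 \<le> ?K / (pi ^ 2 * 2 ^ d)" using pi_gt_zero by simp
  ultimately have "?K / (pi ^ 2 * 2 ^ d) * (norm xs * max (1 / norm x) (1 / norm y))
      \<le> ?K / (pi ^ 2 * 2 ^ d) * (1 / r)"
    by (rule mult_left_mono)
  then have "?K * norm xs / (pi ^ 2 * 2 ^ d) * max (1 / norm x) (1 / norm y)
      \<le> ?K / (r * pi ^ 2 * 2 ^ d)"
    by (simp add: ac_simps)
  then have "(?K * norm xs / (pi ^ 2 * 2 ^ d) * max (1 / norm x) (1 / norm y) + 1 / 2 ^ d) * norm (x - y)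
      \<le> (?K / (r * pi ^ 2 * 2 ^ d) + 1 / 2 ^ d) * norm (x - y)"
    by (intro mult_right_mono add_right_mono) auto
  with bound show "norm (h_vec xs d x - h_vec xs d y)
      \<le> (?K / (r * pi ^ 2 * 2 ^ d) + 1 / 2 ^ d) * norm (x - y)"
    by (rule order_trans)
qed

end
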